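(* Let $N\ge1$, $n=\sum_{\nu=1}^N n_\nu$, $m\ge1$. For $\nu=1,\dots,N$ let $Q_\nu\in\mathbb{R}^{n_\nu\times n_\nu}$ be symmetric positive definite, $c_\nu\in\mathbb{R}^{n_\nu}$, and $X_\nu\subseteq\mathbb{R}^{n_\nu}$ nonempty such that $X=X_1\times\dots\times X_N$ is convex and closed. Let $a\in\mathbb{R}^m$, $a\ge0$, $Q_y\in\mathbb{R}^{m\times m}$ positive definite diagonal, $B,L\in\mathbb{R}^{n\times m}$. Let $\varepsilon>0$ and let $\tilde\phi_\varepsilon:\mathbb{R}\to\mathbb{R}$ be convex and smooth (applied componentwise to vectors). Consider the Nash equilibrium problem NEP($\varepsilon$) in which player $\nu$ solves $$\min_{x_\nu\in X_\nu}\ \theta^\varepsilon_\nu(x_\nu,x_{-\nu})=\tfrac12 x_\nu^\top Q_\nu x_\nu+c_\nu^\top x_\nu+\tfrac12\sum_{i=1}^m a_i\Big[(L^\top+Q_y^{-1}B^\top)x+\tilde\phi_\varepsilon\big((L^\top-Q_y^{-1}B^\top)x\big)\Big]_i.$$ Then NEP($\varepsilon$) has a unique Nash equilibrium, i.e. a unique $x^*\in X$ with $\theta^\varepsilon_\nu(x^*_\nu,x^*_{-\nu})\le\theta^\varepsilon_\nu(x_\nu,x^*_{-\nu})$ for all $x_\nu\in X_\nu$ and all $\nu$.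
   Context: Notation: $x=(x_1,\dots,x_N)$ with $x_\nu\in\mathbb{R}^{n_\nu}$, $x_{-\nu}$ = all components other than $x_\nu$. NEP($\varepsilon$) arises from a multi-leader-follower game by replacing the follower's best response $\max\{Q_y^{-1}B^\top x,L^\top x\}$ with its smoothing $\tfrac12[(L^\top+Q_y^{-1}B^\top)x+\tilde\phi_\varepsilon((L^\top-Q_y^{-1}B^\top)x)]$, obtained from a smooth NCP function $\phi_\varepsilon(\alpha,\beta)=\alpha+\beta-\tilde\phi_\varepsilon(\alpha-\beta)$. *)

theory Defs
  imports "HOL-Analysis.Analysis"
begin

text \<open>Vectors in R^d are represented as functions nat => real vanishing at indices >= d.
  A strategy profile x = (x_1,...,x_N) is a function nat => nat => real, where x nu is the
  block of player nu (nu < N); blocks of indices nu >= N are zero.\<close>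

definition vecs :: "nat \<Rightarrow> (nat \<Rightarrow> real) set" where
  "vecs d = {v. \<forall>j\<ge>d. v j = 0}"

definition profiles :: "nat \<Rightarrow> (nat \<Rightarrow> nat) \<Rightarrow> (nat \<Rightarrow> nat \<Rightarrow> real) set" where
  "profiles N d = {x. (\<forall>\<nu><N. x \<nu> \<in> vecs (d \<nu>)) \<and> (\<forall>\<nu>\<ge>N. x \<nu> = (\<lambda>_. 0))}"

definition prodX :: "nat \<Rightarrow> (nat \<Rightarrow> nat) \<Rightarrow> (nat \<Rightarrow> (nat \<Rightarrow> real) set) \<Rightarrow> (nat \<Rightarrow> nat \<Rightarrow> real) set" where
  "prodX N d Xs = {x \<in> profiles N d. \<forall>\<nu><N. x \<nu> \<in> Xs \<nu>}"

definition convex_profile_set :: "(nat \<Rightarrow> nat \<Rightarrow> real) set \<Rightarrow> bool" where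
  "convex_profile_set S \<longleftrightarrow>
     (\<forall>x\<in>S. \<forall>y\<in>S. \<forall>t::real. 0 \<le> t \<and> t \<le> 1 \<longrightarrow> (\<lambda>\<nu> j. (1 - t) * x \<nu> j + t * y \<nu> j) \<in> S)"

definition sym_pd :: "nat \<Rightarrow> (nat \<Rightarrow> nat \<Rightarrow> real) \<Rightarrow> bool" where
  "sym_pd d Q \<longleftrightarrow> (\<forall>j<d. \<forall>k<d. Q j k = Q k j) \<and>
     (\<forall>v\<in>vecs d. v \<noteq> (\<lambda>_. 0) \<longrightarrow> (\<Sum>j<d. \<Sum>k<d. v j * Q j k * v k) > 0)"

text \<open>(M^T x)_i for an n x m matrix M whose rows are indexed by pairs (nu, j), j < d nu.\<close>
definition matT_apply :: "nat \<Rightarrow> (nat \<Rightarrow> nat) \<Rightarrow> (nat \<Rightarrow> nat \<Rightarrow> nat \<Rightarrow> real) \<Rightarrow> (nat \<Rightarrow> nat \<Rightarrow> real) \<Rightarrow> nat \<Rightarrow> real" where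
  "matT_apply N d M x i = (\<Sum>\<nu><N. \<Sum>j<d \<nu>. M \<nu> j i * x \<nu> j)"

text \<open>Cost of player nu in NEP(eps); qy i are the (positive) diagonal entries of Q_y,
  so (Q_y^{-1} B^T x)_i = (B^T x)_i / qy i.\<close>
definition theta :: "nat \<Rightarrow> (nat \<Rightarrow> nat) \<Rightarrow> nat \<Rightarrow> (nat \<Rightarrow> nat \<Rightarrow> nat \<Rightarrow> real) \<Rightarrow> (nat \<Rightarrow> nat \<Rightarrow> real)
   \<Rightarrow> (nat \<Rightarrow> real) \<Rightarrow> (nat \<Rightarrow> real) \<Rightarrow> (nat \<Rightarrow> nat \<Rightarrow> nat \<Rightarrow> real) \<Rightarrow> (nat \<Rightarrow> nat \<Rightarrow> nat \<Rightarrow> real)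
   \<Rightarrow> (real \<Rightarrow> real) \<Rightarrow> nat \<Rightarrow> (nat \<Rightarrow> nat \<Rightarrow> real) \<Rightarrow> real" where
  "theta N d m Q c a qy B L phi \<nu> x =
     (1/2) * (\<Sum>j<d \<nu>. \<Sum>k<d \<nu>. x \<nu> j * Q \<nu> j k * x \<nu> k)
     + (\<Sum>j<d \<nu>. c \<nu> j * x \<nu> j)
     + (1/2) * (\<Sum>i<m. a i *
          (matT_apply N d L x i + matT_apply N d B x i / qy i
           + phi (matT_apply N d L x i - matT_apply N d B x i / qy i)))"

definition is_nash_eq :: "nat \<Rightarrow> (nat \<Rightarrow> nat) \<Rightarrow> (nat \<Rightarrow> (nat \<Rightarrow> real) set)
   \<Rightarrow> (nat \<Rightarrow> (nat \<Rightarrow> nat \<Rightarrow> real) \<Rightarrow> real) \<Rightarrow> (nat \<Rightarrow> nat \<Rightarrow> real) \<Rightarrow> bool" where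
  "is_nash_eq N d Xs \<theta> x \<longleftrightarrow> x \<in> prodX N d Xs \<and>
     (\<forall>\<nu><N. \<forall>y\<in>Xs \<nu>. \<theta> \<nu> x \<le> \<theta> \<nu> (x(\<nu> := y)))"

end

theory Submission
  imports Defs
begin

text \<open>NEP(\<epsilon>) is a potential game: the cost of player \<nu> is the private quadratic
  q_\<nu>(x_\<nu>) = x_\<nu>' Q_\<nu> x_\<nu> / 2 + c_\<nu>' x_\<nu> plus a shared term F(x), so it differs from the
  potential P(x) = \<Sum>_\<nu> q_\<nu>(x_\<nu>) + F(x) by a quantity not depending on x_\<nu>. F is convex
  because a \<ge> 0 and \<phi> is convex, so
  P(z) \<ge> P(x) + \<nabla>P(x)'(z - x) + \<Sum>_\<nu> (z_\<nu> - x_\<nu>)' Q_\<nu> (z_\<nu> - x_\<nu>) / 2.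
  P is continuous and coercive, hence attains its minimum on the closed set X, and a minimiser
  of P is an equilibrium. Conversely, at an equilibrium x the convexity of X yields each player's
  first-order condition; summed, they give \<nabla>P(x)'(z - x) \<ge> 0 for z \<in> X, so P grows
  quadratically away from x on X. Applying this to two equilibria in both directions shows that
  they coincide.\<close>

lemma compact_Pi_UNIV:
  fixes K :: "'a \<Rightarrow> 'b::topological_space set"
  assumes "\<And>i. compact (K i)"
  shows "compact {f. \<forall>i. f i \<in> K i}"
proof -
  have "{f. \<forall>i. f i \<in> K i} = PiE UNIV K"
    by (auto simp: PiE_UNIV_domain)
  moreover have "compactin (product_topology (\<lambda>_. euclidean) UNIV) (PiE UNIV K)"
    using assms by (simp add: compactin_PiE)
  ultimately show ?thesis
    by (simp add: euclidean_product_topology)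
qed

lemma continuous_on_coordinate [continuous_intros]:
  "continuous_on S (\<lambda>x :: 'a \<Rightarrow> 'b::topological_space. x i)"
  by (rule continuous_on_subset[OF continuous_on_product_coordinates]) simp

lemma continuous_on_coordinate2 [continuous_intros]:
  "continuous_on S (\<lambda>x :: 'a \<Rightarrow> 'b \<Rightarrow> 'c::topological_space. x i j)"
  using continuous_on_compose[of S "\<lambda>x. x i" "\<lambda>f. f j", OF continuous_on_coordinate continuous_on_coordinate]
  by (simp add: o_def)

lemma continuous_attains_inf_sublevel:
  fixes f :: "'a::topological_space \<Rightarrow> real"
  assumes "closed S" and "compact K" and "x0 \<in> S" and "continuous_on S f"
    and sublevel: "\<And>y. y \<in> S \<Longrightarrow> f y \<le> f x0 \<Longrightarrow> y \<in> K"
  shows "\<exists>x\<in>S. \<forall>y\<in>S. f x \<le> f y"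
proof -
  have "compact (K \<inter> S)" and "x0 \<in> K \<inter> S"
    using assms by (auto intro: compact_Int_closed)
  then obtain x where x: "x \<in> K \<inter> S" and min: "\<And>y. y \<in> K \<inter> S \<Longrightarrow> f x \<le> f y"
    using continuous_attains_inf[of "K \<inter> S" f] continuous_on_subset[OF assms(4)]
    by (metis empty_iff inf_le2)
  have "f x \<le> f y" if "y \<in> S" for y
  proof (cases "f y \<le> f x0")
    case True
    then show ?thesis using min sublevel that by blast
  next
    case False
    then show ?thesis using min[of x0] \<open>x0 \<in> K \<inter> S\<close> by linarith
  qed
  then show ?thesis using x by blast
qed

lemma has_real_derivative_nonneg_at_right_min:
  fixes f :: "real \<Rightarrow> real"
  assumes "(f has_real_derivative D) (at 0)" and "\<And>t. 0 < t \<Longrightarrow> t \<le> 1 \<Longrightarrow> f 0 \<le> f t"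
  shows "0 \<le> D"
proof (rule ccontr)
  assume "\<not> 0 \<le> D"
  then obtain \<delta> where "\<delta> > 0" and "\<And>h. 0 < h \<Longrightarrow> h < \<delta> \<Longrightarrow> f (0 + h) < f 0"
    using DERIV_neg_dec_right[OF assms(1)] by force
  then show False
    using assms(2)[of "min (\<delta>/2) 1"] by (smt (verit) field_sum_of_halves)
qed

lemma convex_on_above_tangent_deriv:
  fixes f :: "real \<Rightarrow> real"
  assumes "convex_on UNIV f" and "f differentiable at a"
  shows "deriv f a * (b - a) \<le> f b - f a"
  using convex_on_imp_above_tangent[OF assms(1), of a b "deriv f a"] assms(2)
  by (simp add: DERIV_deriv_iff_real_differentiable)

lemma mult_ge_neg_squares:
  fixes lam w v :: real
  assumes "lam > 0"
  shows "- (lam / 4) * v\<^sup>2 - w\<^sup>2 / lam \<le> w * v"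
proof -
  have "0 \<le> (lam * v / 2 + w)\<^sup>2 / lam"
    using assms by simp
  also have "\<dots> = w * v + (lam / 4) * v\<^sup>2 + w\<^sup>2 / lam"
    using assms by (simp add: field_simps power2_eq_square)
  finally show ?thesis by linarith
qed

section \<open>Quadratic forms\<close>

definition quad_form :: "nat \<Rightarrow> (nat \<Rightarrow> nat \<Rightarrow> real) \<Rightarrow> (nat \<Rightarrow> real) \<Rightarrow> real" where
  "quad_form n A v = (\<Sum>j<n. \<Sum>k<n. v j * A j k * v k)"

lemma quad_form_add:
  "quad_form n A (\<lambda>j. u j + h j)
     = quad_form n A u + (\<Sum>j<n. (\<Sum>k<n. (A j k + A k j) * u k) * h j) + quad_form n A h"
proof -
  have "quad_form n A (\<lambda>j. u j + h j)
      = quad_form n A u + (\<Sum>j<n. \<Sum>k<n. u j * A j k * h k + h j * A j k * u k) + quad_form n A h"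
    unfolding quad_form_def by (simp add: sum.distrib[symmetric] algebra_simps)
  also have "(\<Sum>j<n. \<Sum>k<n. u j * A j k * h k + h j * A j k * u k)
      = (\<Sum>j<n. \<Sum>k<n. h j * A k j * u k) + (\<Sum>j<n. \<Sum>k<n. h j * A j k * u k)"
    by (subst sum.swap) (simp add: sum.distrib algebra_simps)
  also have "\<dots> = (\<Sum>j<n. \<Sum>k<n. (A j k + A k j) * u k * h j)"
    by (simp add: sum.distrib[symmetric] algebra_simps)
  also have "\<dots> = (\<Sum>j<n. (\<Sum>k<n. (A j k + A k j) * u k) * h j)"
    by (simp add: sum_distrib_right)
  finally show ?thesis .
qed

lemma quad_form_scale: "quad_form n A (\<lambda>j. t * v j) = t\<^sup>2 * quad_form n A v"
  by (simp add: quad_form_def sum_distrib_left power2_eq_square algebra_simps)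

lemma sym_pd_quad_form_pos: "sym_pd n A \<Longrightarrow> v \<in> vecs n \<Longrightarrow> v \<noteq> (\<lambda>_. 0) \<Longrightarrow> 0 < quad_form n A v"
  by (simp add: sym_pd_def quad_form_def)

lemma sym_pd_quad_form_nonneg: "sym_pd n A \<Longrightarrow> v \<in> vecs n \<Longrightarrow> 0 \<le> quad_form n A v"
  by (cases "v = (\<lambda>_. 0)") (auto simp: quad_form_def dest: sym_pd_quad_form_pos)

lemma sym_pd_bounded_below_on_sphere:
  assumes "sym_pd n A"
  shows "\<exists>lam>0. \<forall>u\<in>vecs n. (\<Sum>j<n. (u j)\<^sup>2) = 1 \<longrightarrow> lam \<le> quad_form n A u"
proof -
  define S where "S = {u \<in> vecs n. (\<Sum>j<n. (u j)\<^sup>2) = 1}"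
  have S_eq: "S = {u. \<forall>j. u j \<in> (if j < n then {-1..1} else {0})} \<inter> {u. (\<Sum>j<n. (u j)\<^sup>2) = 1}"
  proof (intro equalityI subsetI)
    fix u assume "u \<in> S"
    then have u: "u \<in> vecs n" and norm_u: "(\<Sum>j<n. (u j)\<^sup>2) = 1"
      by (auto simp: S_def)
    have "u j \<in> (if j < n then {-1..1} else {0})" for j
    proof (cases "j < n")
      case True
      then have "(u j)\<^sup>2 \<le> 1"
        using norm_u member_le_sum[of j "{..<n}" "\<lambda>j. (u j)\<^sup>2"] by simp
      then have "\<bar>u j\<bar> \<le> 1"
        by (simp add: abs_square_le_1)
      then show ?thesis
        using True by (simp add: abs_le_iff)
    next
      case False
      then show ?thesis
        using u by (simp add: vecs_def)
    qed
    with norm_u show "u \<in> {u. \<forall>j. u j \<in> (if j < n then {-1..1} else {0})} \<inter> {u. (\<Sum>j<n. (u j)\<^sup>2) = 1}"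
      by simp
  next
    fix u :: "nat \<Rightarrow> real"
    assume u: "u \<in> {u. \<forall>j. u j \<in> (if j < n then {-1..1} else {0})} \<inter> {u. (\<Sum>j<n. (u j)\<^sup>2) = 1}"
    then have "\<forall>j. u j \<in> (if j < n then {-1..1} else {0})"
      by blast
    then have "u j = 0" if "n \<le> j" for j
      using that by (metis not_le singletonD)
    with u show "u \<in> S"
      by (simp add: S_def vecs_def)
  qed
  have "compact {u :: nat \<Rightarrow> real. \<forall>j. u j \<in> (if j < n then {-1..1} else {0})}"
    by (rule compact_Pi_UNIV) simp
  moreover have "closed {u :: nat \<Rightarrow> real. (\<Sum>j<n. (u j)\<^sup>2) = 1}"
    by (intro closed_Collect_eq continuous_intros)
  ultimately have "compact S"
    by (simp add: S_eq compact_Int_closed)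
  moreover have "continuous_on S (quad_form n A)"
    unfolding quad_form_def by (intro continuous_intros)
  ultimately show ?thesis
  proof (cases "S = {}")
    case False
    then obtain u0 where "u0 \<in> S" and "\<forall>u\<in>S. quad_form n A u0 \<le> quad_form n A u"
      using continuous_attains_inf \<open>compact S\<close> \<open>continuous_on S (quad_form n A)\<close> by blast
    moreover have "u0 \<noteq> (\<lambda>_. 0)"
      using \<open>u0 \<in> S\<close> by (auto simp: S_def)
    ultimately show ?thesis
      using sym_pd_quad_form_pos[OF assms] unfolding S_def by blast
  next
    case True
    then have "\<forall>u\<in>vecs n. (\<Sum>j<n. (u j)\<^sup>2) = 1 \<longrightarrow> 1 \<le> quad_form n A u"
      by (auto simp: S_def)
    then show ?thesis
      by (intro exI[of _ "1::real"]) simp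
  qed
qed

lemma sym_pd_coercive:
  assumes "sym_pd n A"
  shows "\<exists>lam>0. \<forall>v\<in>vecs n. lam * (\<Sum>j<n. (v j)\<^sup>2) \<le> quad_form n A v"
proof -
  obtain lam where "lam > 0"
    and lam: "\<And>u. u \<in> vecs n \<Longrightarrow> (\<Sum>j<n. (u j)\<^sup>2) = 1 \<Longrightarrow> lam \<le> quad_form n A u"
    using sym_pd_bounded_below_on_sphere[OF assms] by blast
  have "lam * (\<Sum>j<n. (v j)\<^sup>2) \<le> quad_form n A v" if v: "v \<in> vecs n" for v
  proof -
    define r where "r = (\<Sum>j<n. (v j)\<^sup>2)"
    show ?thesis
    proof (cases "r = 0")
      case True
      then show ?thesis
        using sym_pd_quad_form_nonneg[OF assms v] by (simp add: r_def)
    next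
      case False
      then have "r > 0"
        unfolding r_def by (metis order_le_neq_trans sum_nonneg zero_le_power2)
      define u where "u = (\<lambda>j. v j / sqrt r)"
      have "u \<in> vecs n"
        using v by (simp add: u_def vecs_def)
      moreover have "(\<Sum>j<n. (u j)\<^sup>2) = (\<Sum>j<n. (v j)\<^sup>2) / r"
        using \<open>r > 0\<close> by (simp add: u_def power_divide sum_divide_distrib)
      then have "(\<Sum>j<n. (u j)\<^sup>2) = 1"
        using \<open>r > 0\<close> by (simp add: r_def)
      moreover have "quad_form n A u = quad_form n A v / r"
        using quad_form_scale[of n A "1 / sqrt r" v] \<open>r > 0\<close>
        by (simp add: u_def power_divide)
      ultimately show ?thesis
        using lam[of u] \<open>r > 0\<close> by (simp add: r_def pos_le_divide_eq)
    qed
  qed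
  with \<open>lam > 0\<close> show ?thesis by blast
qed

definition profile_inner :: "nat \<Rightarrow> (nat \<Rightarrow> nat) \<Rightarrow> (nat \<Rightarrow> nat \<Rightarrow> real) \<Rightarrow> (nat \<Rightarrow> nat \<Rightarrow> real) \<Rightarrow> real" where
  "profile_inner N d x y = (\<Sum>\<nu><N. \<Sum>j<d \<nu>. x \<nu> j * y \<nu> j)"

lemma profile_inner_block:
  assumes "\<nu> < N"
  shows "profile_inner N d g (\<lambda>\<mu> j. if \<mu> = \<nu> then h j else 0) = (\<Sum>j<d \<nu>. g \<nu> j * h j)"
proof -
  have "profile_inner N d g (\<lambda>\<mu> j. if \<mu> = \<nu> then h j else 0)
      = (\<Sum>\<mu><N. if \<mu> = \<nu> then (\<Sum>j<d \<nu>. g \<nu> j * h j) else 0)"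
    unfolding profile_inner_def by (rule sum.cong) auto
  then show ?thesis
    using assms by simp
qed

lemma profile_coordinate_sq_le:
  assumes "\<nu> < N" and "j < d \<nu>"
  shows "(x \<nu> j)\<^sup>2 \<le> profile_inner N d x x"
proof -
  have "(x \<nu> j)\<^sup>2 \<le> (\<Sum>j<d \<nu>. (x \<nu> j)\<^sup>2)"
    using assms by (intro member_le_sum) auto
  also have "\<dots> \<le> (\<Sum>\<nu><N. \<Sum>j<d \<nu>. (x \<nu> j)\<^sup>2)"
    using assms by (intro member_le_sum[of \<nu> "{..<N}" "\<lambda>\<nu>. \<Sum>j<d \<nu>. (x \<nu> j)\<^sup>2"] sum_nonneg) auto
  finally show ?thesis
    by (simp add: profile_inner_def power2_eq_square)
qed

lemma profile_inner_ge_neg_squares: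
  fixes lam :: real
  assumes "lam > 0"
  shows "- (lam / 4) * profile_inner N d x x - profile_inner N d g g / lam \<le> profile_inner N d g x"
proof -
  have "(\<Sum>\<nu><N. \<Sum>j<d \<nu>. - (lam / 4) * (x \<nu> j)\<^sup>2 - (g \<nu> j)\<^sup>2 / lam) \<le> profile_inner N d g x"
    unfolding profile_inner_def by (intro sum_mono mult_ge_neg_squares assms)
  then show ?thesis
    by (simp add: profile_inner_def power2_eq_square sum_subtractf sum_distrib_left sum_divide_distrib)
qed

lemma profile_quad_form_coercive:
  assumes "\<forall>\<nu><N. sym_pd (d \<nu>) (Q \<nu>)"
  shows "\<exists>lam>0. \<forall>x\<in>profiles N d.
           lam * profile_inner N d x x \<le> (\<Sum>\<nu><N. quad_form (d \<nu>) (Q \<nu>) (x \<nu>))"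
proof -
  have "\<forall>\<nu>. \<exists>l. \<nu> < N \<longrightarrow> l > 0 \<and>
      (\<forall>v\<in>vecs (d \<nu>). l * (\<Sum>j<d \<nu>. (v j)\<^sup>2) \<le> quad_form (d \<nu>) (Q \<nu>) v)"
    using sym_pd_coercive assms by blast
  from choice[OF this] obtain lam where lam_pos: "\<forall>\<nu><N. lam \<nu> > 0"
    and lam: "\<forall>\<nu><N. \<forall>v\<in>vecs (d \<nu>). lam \<nu> * (\<Sum>j<d \<nu>. (v j)\<^sup>2) \<le> quad_form (d \<nu>) (Q \<nu>) v"
    by blast
  define lam0 where "lam0 = Min (insert 1 (lam ` {..<N}))"
  have "lam0 > 0"
    using lam_pos by (auto simp: lam0_def)
  have "lam0 * profile_inner N d x x \<le> (\<Sum>\<nu><N. quad_form (d \<nu>) (Q \<nu>) (x \<nu>))"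
    if x: "x \<in> profiles N d" for x
  proof -
    have "lam0 * profile_inner N d x x = (\<Sum>\<nu><N. lam0 * (\<Sum>j<d \<nu>. (x \<nu> j)\<^sup>2))"
      by (simp add: profile_inner_def sum_distrib_left power2_eq_square)
    also have "\<dots> \<le> (\<Sum>\<nu><N. lam \<nu> * (\<Sum>j<d \<nu>. (x \<nu> j)\<^sup>2))"
      by (intro sum_mono mult_right_mono sum_nonneg) (auto simp: lam0_def)
    also have "\<dots> \<le> (\<Sum>\<nu><N. quad_form (d \<nu>) (Q \<nu>) (x \<nu>))"
      using x lam by (intro sum_mono) (auto simp: profiles_def)
    finally show ?thesis .
  qed
  with \<open>lam0 > 0\<close> show ?thesis by blast
qed

lemma compact_coordinatewise_bounded:
  "compact {x :: 'a \<Rightarrow> 'b \<Rightarrow> real. \<forall>\<nu> j. \<bar>x \<nu> j\<bar> \<le> R}"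
proof -
  have "\<bar>t\<bar> \<le> R \<longleftrightarrow> t \<in> {-R..R}" for t :: real
    by auto
  then have eq: "{x :: 'a \<Rightarrow> 'b \<Rightarrow> real. \<forall>\<nu> j. \<bar>x \<nu> j\<bar> \<le> R} = {x. \<forall>\<nu>. x \<nu> \<in> {v. \<forall>j. v j \<in> {-R..R}}}"
    by (simp only: mem_Collect_eq)
  show ?thesis
    unfolding eq by (rule compact_Pi_UNIV)+ (rule compact_Icc)
qed

lemma prodX_update:
  assumes "x \<in> prodX N d Xs" and "\<nu> < N" and "w \<in> Xs \<nu>" and "Xs \<nu> \<subseteq> vecs (d \<nu>)"
  shows "x(\<nu> := w) \<in> prodX N d Xs"
  using assms by (auto simp: prodX_def profiles_def)

section \<open>The potential of NEP(\<epsilon>)\<close>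

lemma matT_apply_add_scaled:
  "matT_apply N d M (\<lambda>\<mu> j. x \<mu> j + t * h \<mu> j) i = matT_apply N d M x i + t * matT_apply N d M h i"
  by (simp add: matT_apply_def sum.distrib sum_distrib_left algebra_simps)

locale smoothed_nep =
  fixes N m :: nat and d :: "nat \<Rightarrow> nat"
    and Q :: "nat \<Rightarrow> nat \<Rightarrow> nat \<Rightarrow> real" and c :: "nat \<Rightarrow> nat \<Rightarrow> real"
    and Xs :: "nat \<Rightarrow> (nat \<Rightarrow> real) set"
    and a qy :: "nat \<Rightarrow> real" and B L :: "nat \<Rightarrow> nat \<Rightarrow> nat \<Rightarrow> real"
    and phi :: "real \<Rightarrow> real"
  assumes Q_pd: "\<forall>\<nu><N. sym_pd (d \<nu>) (Q \<nu>)"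
    and Xs_nonempty: "\<forall>\<nu><N. Xs \<nu> \<noteq> {}"
    and Xs_vecs: "\<forall>\<nu><N. Xs \<nu> \<subseteq> vecs (d \<nu>)"
    and X_convex: "convex_profile_set (prodX N d Xs)"
    and X_closed: "closed (prodX N d Xs)"
    and a_nonneg: "\<forall>i<m. a i \<ge> 0"
    and phi_convex: "convex_on UNIV phi"
    and phi_C1: "phi C1_differentiable_on UNIV"
begin

abbreviation cost :: "nat \<Rightarrow> (nat \<Rightarrow> nat \<Rightarrow> real) \<Rightarrow> real" where
  "cost \<equiv> theta N d m Q c a qy B L phi"

abbreviation nash_eq :: "(nat \<Rightarrow> nat \<Rightarrow> real) \<Rightarrow> bool" where
  "nash_eq \<equiv> is_nash_eq N d Xs cost"

definition lin_plus :: "(nat \<Rightarrow> nat \<Rightarrow> real) \<Rightarrow> nat \<Rightarrow> real" where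
  "lin_plus x i = matT_apply N d L x i + matT_apply N d B x i / qy i"

definition lin_minus :: "(nat \<Rightarrow> nat \<Rightarrow> real) \<Rightarrow> nat \<Rightarrow> real" where
  "lin_minus x i = matT_apply N d L x i - matT_apply N d B x i / qy i"

definition own_cost :: "nat \<Rightarrow> (nat \<Rightarrow> real) \<Rightarrow> real" where
  "own_cost \<nu> v = quad_form (d \<nu>) (Q \<nu>) v / 2 + (\<Sum>j<d \<nu>. c \<nu> j * v j)"

definition shared_cost :: "(nat \<Rightarrow> nat \<Rightarrow> real) \<Rightarrow> real" where
  "shared_cost x = (\<Sum>i<m. a i * (lin_plus x i + phi (lin_minus x i))) / 2"

definition potential :: "(nat \<Rightarrow> nat \<Rightarrow> real) \<Rightarrow> real" where
  "potential x = (\<Sum>\<nu><N. own_cost \<nu> (x \<nu>)) + shared_cost x"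

definition own_grad :: "nat \<Rightarrow> (nat \<Rightarrow> real) \<Rightarrow> nat \<Rightarrow> real" where
  "own_grad \<nu> v j = (\<Sum>k<d \<nu>. (Q \<nu> j k + Q \<nu> k j) * v k) / 2 + c \<nu> j"

definition shared_grad :: "(nat \<Rightarrow> nat \<Rightarrow> real) \<Rightarrow> nat \<Rightarrow> nat \<Rightarrow> real" where
  "shared_grad x \<nu> j = (\<Sum>i<m. a i * (L \<nu> j i + B \<nu> j i / qy i
      + deriv phi (lin_minus x i) * (L \<nu> j i - B \<nu> j i / qy i))) / 2"

definition potential_grad :: "(nat \<Rightarrow> nat \<Rightarrow> real) \<Rightarrow> nat \<Rightarrow> nat \<Rightarrow> real" where
  "potential_grad x \<nu> j = own_grad \<nu> (x \<nu>) j + shared_grad x \<nu> j"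

lemma cost_eq: "cost \<nu> x = own_cost \<nu> (x \<nu>) + shared_cost x"
  unfolding theta_def own_cost_def shared_cost_def quad_form_def lin_plus_def lin_minus_def
  by (simp add: algebra_simps)

lemma potential_fun_upd:
  assumes "\<nu> < N"
  shows "potential (x(\<nu> := v)) = cost \<nu> (x(\<nu> := v)) + (\<Sum>\<mu>\<in>{..<N} - {\<nu>}. own_cost \<mu> (x \<mu>))"
proof -
  have "potential (x(\<nu> := v))
      = cost \<nu> (x(\<nu> := v)) + (\<Sum>\<mu>\<in>{..<N} - {\<nu>}. own_cost \<mu> ((x(\<nu> := v)) \<mu>))"
    using assms by (simp add: potential_def cost_eq sum.remove[of "{..<N}" \<nu>])
  also have "(\<Sum>\<mu>\<in>{..<N} - {\<nu>}. own_cost \<mu> ((x(\<nu> := v)) \<mu>)) = (\<Sum>\<mu>\<in>{..<N} - {\<nu>}. own_cost \<mu> (x \<mu>))"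
    by (rule sum.cong) auto
  finally show ?thesis .
qed

lemma lin_plus_add_scaled: "lin_plus (\<lambda>\<mu> j. x \<mu> j + t * h \<mu> j) i = lin_plus x i + t * lin_plus h i"
  by (simp add: lin_plus_def matT_apply_add_scaled algebra_simps add_divide_distrib)

lemma lin_minus_add_scaled: "lin_minus (\<lambda>\<mu> j. x \<mu> j + t * h \<mu> j) i = lin_minus x i + t * lin_minus h i"
  by (simp add: lin_minus_def matT_apply_add_scaled algebra_simps diff_divide_distrib add_divide_distrib)

lemma shared_directional_eq_inner:
  "(\<Sum>i<m. a i * (lin_plus h i + deriv phi (lin_minus x i) * lin_minus h i)) / 2
     = profile_inner N d (shared_grad x) h"
proof -
  have per_i: "a i * (lin_plus h i + p * lin_minus h i)
      = (\<Sum>\<nu><N. \<Sum>j<d \<nu>. a i * (L \<nu> j i + B \<nu> j i / qy i + p * (L \<nu> j i - B \<nu> j i / qy i)) * h \<nu> j)"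
    for i p
    by (simp add: lin_plus_def lin_minus_def matT_apply_def sum_divide_distrib sum_distrib_left
        sum.distrib[symmetric] sum_subtractf[symmetric] algebra_simps)
  have "(\<Sum>i<m. a i * (lin_plus h i + deriv phi (lin_minus x i) * lin_minus h i))
      = (\<Sum>\<nu><N. \<Sum>j<d \<nu>. \<Sum>i<m. a i * (L \<nu> j i + B \<nu> j i / qy i
          + deriv phi (lin_minus x i) * (L \<nu> j i - B \<nu> j i / qy i)) * h \<nu> j)"
    by (simp add: per_i sum.swap[of _ "{..<m}"])
  then show ?thesis
    by (simp add: profile_inner_def shared_grad_def sum_distrib_right sum_divide_distrib)
qed

lemma phi_has_deriv: "(phi has_real_derivative deriv phi s) (at s)"
  using phi_C1 by (simp add: C1_differentiable_on_eq DERIV_deriv_iff_real_differentiable)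

lemma phi_line_deriv: "((\<lambda>t. phi (s + t * r)) has_real_derivative deriv phi s * r) (at 0)"
proof -
  have "((\<lambda>t. s + t * r) has_real_derivative r) (at 0)"
    by (auto intro!: derivative_eq_intros)
  moreover have "(phi has_real_derivative deriv phi s) (at ((\<lambda>t. s + t * r) 0))"
    using phi_has_deriv by simp
  ultimately show ?thesis
    using DERIV_chain2 by fastforce
qed

lemma shared_cost_line_deriv:
  "((\<lambda>t. shared_cost (\<lambda>\<mu> j. x \<mu> j + t * h \<mu> j)) has_real_derivative
     profile_inner N d (shared_grad x) h) (at 0)"
proof -
  have "((\<lambda>t. (\<Sum>i<m. a i * (lin_plus x i + t * lin_plus h i + phi (lin_minus x i + t * lin_minus h i))) / 2)
      has_real_derivative (\<Sum>i<m. a i * (lin_plus h i + deriv phi (lin_minus x i) * lin_minus h i)) / 2) (at 0)"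
    by (auto intro!: derivative_eq_intros phi_line_deriv simp: mult.commute)
  then show ?thesis
    by (simp add: shared_cost_def lin_plus_add_scaled lin_minus_add_scaled shared_directional_eq_inner)
qed

lemma shared_cost_above_tangent:
  "shared_cost x + profile_inner N d (shared_grad x) (\<lambda>\<mu> j. z \<mu> j - x \<mu> j) \<le> shared_cost z"
proof -
  define h where "h = (\<lambda>\<mu> j. z \<mu> j - x \<mu> j)"
  have z: "z = (\<lambda>\<mu> j. x \<mu> j + 1 * h \<mu> j)"
    by (simp add: h_def)
  have "a i * (lin_plus h i + deriv phi (lin_minus x i) * lin_minus h i)
      \<le> a i * (lin_plus x i + lin_plus h i + phi (lin_minus x i + lin_minus h i))
        - a i * (lin_plus x i + phi (lin_minus x i))" if "i < m" for i
  proof -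
    have "deriv phi (lin_minus x i) * lin_minus h i
        \<le> phi (lin_minus x i + lin_minus h i) - phi (lin_minus x i)"
      using convex_on_above_tangent_deriv[OF phi_convex, of "lin_minus x i" "lin_minus x i + lin_minus h i"]
        phi_has_deriv real_differentiable_def by auto
    then show ?thesis
      using a_nonneg that mult_left_mono by (fastforce simp: algebra_simps)
  qed
  then have "(\<Sum>i<m. a i * (lin_plus h i + deriv phi (lin_minus x i) * lin_minus h i))
      \<le> (\<Sum>i<m. a i * (lin_plus x i + lin_plus h i + phi (lin_minus x i + lin_minus h i))
        - a i * (lin_plus x i + phi (lin_minus x i)))"
    by (intro sum_mono) simp
  also have "\<dots> = (\<Sum>i<m. a i * (lin_plus x i + lin_plus h i + phi (lin_minus x i + lin_minus h i)))
        - (\<Sum>i<m. a i * (lin_plus x i + phi (lin_minus x i)))"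
    by (rule sum_subtractf)
  also have "\<dots> = 2 * shared_cost z - 2 * shared_cost x"
  proof -
    have "shared_cost z
        = (\<Sum>i<m. a i * (lin_plus x i + lin_plus h i + phi (lin_minus x i + lin_minus h i))) / 2"
      using lin_plus_add_scaled[of x 1 h] lin_minus_add_scaled[of x 1 h]
      by (subst z) (simp add: shared_cost_def)
    then show ?thesis
      by (simp add: shared_cost_def)
  qed
  finally show ?thesis
    using shared_directional_eq_inner[of h x] by (simp add: h_def)
qed

lemma own_cost_add:
  "own_cost \<nu> (\<lambda>j. u j + h j)
     = own_cost \<nu> u + (\<Sum>j<d \<nu>. own_grad \<nu> u j * h j) + quad_form (d \<nu>) (Q \<nu>) h / 2"
proof -
  have split: "((s::real) / 2 + e) * g = s * g / 2 + e * g" for s e g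
    by (simp add: algebra_simps)
  have "(\<Sum>j<d \<nu>. own_grad \<nu> u j * h j)
      = (\<Sum>j<d \<nu>. (\<Sum>k<d \<nu>. (Q \<nu> j k + Q \<nu> k j) * u k) * h j / 2 + c \<nu> j * h j)"
    unfolding own_grad_def split ..
  also have "\<dots> = (\<Sum>j<d \<nu>. (\<Sum>k<d \<nu>. (Q \<nu> j k + Q \<nu> k j) * u k) * h j) / 2
      + (\<Sum>j<d \<nu>. c \<nu> j * h j)"
    by (simp only: sum.distrib sum_divide_distrib)
  moreover have "(\<Sum>j<d \<nu>. c \<nu> j * (u j + h j)) = (\<Sum>j<d \<nu>. c \<nu> j * u j) + (\<Sum>j<d \<nu>. c \<nu> j * h j)"
    by (simp add: distrib_left sum.distrib)
  ultimately show ?thesis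
    using quad_form_add[of "d \<nu>" "Q \<nu>" u h] by (simp add: own_cost_def)
qed

lemma profile_inner_potential_grad:
  "profile_inner N d (potential_grad x) h
     = (\<Sum>\<nu><N. \<Sum>j<d \<nu>. own_grad \<nu> (x \<nu>) j * h \<nu> j) + profile_inner N d (shared_grad x) h"
  by (simp add: profile_inner_def potential_grad_def sum.distrib distrib_right)

lemma potential_line_deriv:
  "((\<lambda>t. potential (\<lambda>\<mu> j. x \<mu> j + t * h \<mu> j)) has_real_derivative
     profile_inner N d (potential_grad x) h) (at 0)"
proof -
  have own: "((\<lambda>t. own_cost \<nu> (\<lambda>j. x \<nu> j + t * h \<nu> j)) has_real_derivative
      (\<Sum>j<d \<nu>. own_grad \<nu> (x \<nu>) j * h \<nu> j)) (at 0)" for \<nu>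
  proof -
    have "own_cost \<nu> (\<lambda>j. x \<nu> j + t * h \<nu> j)
        = own_cost \<nu> (x \<nu>) + t * (\<Sum>j<d \<nu>. own_grad \<nu> (x \<nu>) j * h \<nu> j)
          + t\<^sup>2 * quad_form (d \<nu>) (Q \<nu>) (h \<nu>) / 2" for t
      using own_cost_add[of \<nu> "x \<nu>" "\<lambda>j. t * h \<nu> j"]
      by (simp add: quad_form_scale sum_distrib_left algebra_simps)
    moreover have "((\<lambda>t. own_cost \<nu> (x \<nu>) + t * (\<Sum>j<d \<nu>. own_grad \<nu> (x \<nu>) j * h \<nu> j)
          + t\<^sup>2 * quad_form (d \<nu>) (Q \<nu>) (h \<nu>) / 2) has_real_derivative
        (\<Sum>j<d \<nu>. own_grad \<nu> (x \<nu>) j * h \<nu> j)) (at 0)"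
      by (auto intro!: derivative_eq_intros)
    ultimately show ?thesis
      by simp
  qed
  show ?thesis
    unfolding potential_def profile_inner_potential_grad
    by (intro DERIV_add DERIV_sum own shared_cost_line_deriv)
qed

lemma potential_above_tangent:
  "potential x + profile_inner N d (potential_grad x) (\<lambda>\<mu> j. z \<mu> j - x \<mu> j)
     + (\<Sum>\<nu><N. quad_form (d \<nu>) (Q \<nu>) (\<lambda>j. z \<nu> j - x \<nu> j)) / 2 \<le> potential z"
proof -
  have "own_cost \<nu> (z \<nu>) = own_cost \<nu> (x \<nu>) + (\<Sum>j<d \<nu>. own_grad \<nu> (x \<nu>) j * (z \<nu> j - x \<nu> j))
      + quad_form (d \<nu>) (Q \<nu>) (\<lambda>j. z \<nu> j - x \<nu> j) / 2" for \<nu>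
    using own_cost_add[of \<nu> "x \<nu>" "\<lambda>j. z \<nu> j - x \<nu> j"] by simp
  then show ?thesis
    using shared_cost_above_tangent[of x z]
    by (simp add: potential_def profile_inner_potential_grad sum.distrib sum_divide_distrib)
qed

section \<open>Nash equilibria\<close>

lemma block_convex_combination_in_Xs:
  assumes "x \<in> prodX N d Xs" and "\<nu> < N" and "w \<in> Xs \<nu>" and "0 \<le> t" and "t \<le> 1"
  shows "(\<lambda>j. (1 - t) * x \<nu> j + t * w j) \<in> Xs \<nu>"
proof -
  have "x(\<nu> := w) \<in> prodX N d Xs"
    using assms Xs_vecs by (intro prodX_update) auto
  then have "(\<lambda>\<mu> j. (1 - t) * x \<mu> j + t * (x(\<nu> := w)) \<mu> j) \<in> prodX N d Xs"
    using X_convex assms unfolding convex_profile_set_def by blast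
  then have "(\<lambda>j. (1 - t) * x \<nu> j + t * (x(\<nu> := w)) \<nu> j) \<in> Xs \<nu>"
    using \<open>\<nu> < N\<close> unfolding prodX_def by blast
  then show ?thesis
    by simp
qed

lemma nash_eq_block_variational_ineq:
  assumes nash: "nash_eq x" and "\<nu> < N" and "w \<in> Xs \<nu>"
  shows "0 \<le> (\<Sum>j<d \<nu>. potential_grad x \<nu> j * (w j - x \<nu> j))"
proof -
  define h where "h = (\<lambda>\<mu> j. if \<mu> = \<nu> then w j - x \<nu> j else (0::real))"
  define f where "f t = cost \<nu> (\<lambda>\<mu> j. x \<mu> j + t * h \<mu> j)" for t
  have line: "(\<lambda>\<mu> j. x \<mu> j + t * h \<mu> j) = x(\<nu> := (\<lambda>j. (1 - t) * x \<nu> j + t * w j))" for t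
    by (auto simp: h_def fun_eq_iff algebra_simps)
  have "f = (\<lambda>t. potential (\<lambda>\<mu> j. x \<mu> j + t * h \<mu> j) - (\<Sum>\<mu>\<in>{..<N} - {\<nu>}. own_cost \<mu> (x \<mu>)))"
    unfolding f_def line potential_fun_upd[OF \<open>\<nu> < N\<close>] by simp
  then have "(f has_real_derivative profile_inner N d (potential_grad x) h) (at 0)"
    using DERIV_diff[OF potential_line_deriv DERIV_const] by simp
  moreover have "f 0 \<le> f t" if "0 < t" "t \<le> 1" for t
  proof -
    have "x \<in> prodX N d Xs"
      using nash by (simp add: is_nash_eq_def)
    then have "(\<lambda>j. (1 - t) * x \<nu> j + t * w j) \<in> Xs \<nu>"
      using assms that by (intro block_convex_combination_in_Xs) auto
    then show ?thesis
      using nash \<open>\<nu> < N\<close> by (simp add: f_def line is_nash_eq_def)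
  qed
  ultimately have "0 \<le> profile_inner N d (potential_grad x) h"
    by (rule has_real_derivative_nonneg_at_right_min)
  then show ?thesis
    using profile_inner_block[OF \<open>\<nu> < N\<close>] by (simp add: h_def)
qed

lemma nash_eq_quadratic_growth:
  assumes nash: "nash_eq x" and z: "z \<in> prodX N d Xs"
  shows "potential x + (\<Sum>\<nu><N. quad_form (d \<nu>) (Q \<nu>) (\<lambda>j. z \<nu> j - x \<nu> j)) / 2 \<le> potential z"
proof -
  have "0 \<le> profile_inner N d (potential_grad x) (\<lambda>\<mu> j. z \<mu> j - x \<mu> j)"
    unfolding profile_inner_def
    using z by (intro sum_nonneg nash_eq_block_variational_ineq[OF nash]) (auto simp: prodX_def)
  then show ?thesis
    using potential_above_tangent[of x z] by linarith
qed

lemma nash_eq_unique: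
  assumes "nash_eq x" and "nash_eq z"
  shows "x = z"
proof -
  have x: "x \<in> prodX N d Xs" and z: "z \<in> prodX N d Xs"
    using assms by (auto simp: is_nash_eq_def)
  have diff_vecs: "(\<lambda>j. y \<nu> j - y' \<nu> j) \<in> vecs (d \<nu>)"
    if "y \<in> prodX N d Xs" "y' \<in> prodX N d Xs" "\<nu> < N" for y y' \<nu>
    using that by (auto simp: prodX_def profiles_def vecs_def)
  define q where "q y y' = (\<Sum>\<nu><N. quad_form (d \<nu>) (Q \<nu>) (\<lambda>j. y \<nu> j - y' \<nu> j))" for y y'
  have q_nonneg: "0 \<le> quad_form (d \<nu>) (Q \<nu>) (\<lambda>j. y \<nu> j - y' \<nu> j)"
    if "y \<in> prodX N d Xs" "y' \<in> prodX N d Xs" "\<nu> < N" for y y' \<nu>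
    using Q_pd that diff_vecs by (blast intro: sym_pd_quad_form_nonneg)
  have "q z x + q x z \<le> 0"
    using nash_eq_quadratic_growth[OF assms(1) z] nash_eq_quadratic_growth[OF assms(2) x]
    by (simp add: q_def)
  moreover have "0 \<le> q x z" and "0 \<le> q z x"
    unfolding q_def using x z q_nonneg by (auto intro: sum_nonneg)
  ultimately have "q z x = 0"
    by linarith
  then have "quad_form (d \<nu>) (Q \<nu>) (\<lambda>j. z \<nu> j - x \<nu> j) = 0" if "\<nu> < N" for \<nu>
    unfolding q_def using x z q_nonneg that by (subst (asm) sum_nonneg_eq_0_iff) auto
  then have "z \<nu> = x \<nu>" if "\<nu> < N" for \<nu>
    using sym_pd_quad_form_pos[of "d \<nu>" "Q \<nu>" "\<lambda>j. z \<nu> j - x \<nu> j"] Q_pd diff_vecs[OF z x] that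
    by (force simp: fun_eq_iff)
  moreover have "z \<nu> = x \<nu>" if "\<not> \<nu> < N" for \<nu>
    using x z that by (simp add: prodX_def profiles_def)
  ultimately show ?thesis
    by (metis ext)
qed

lemma potential_minimizer_is_nash_eq:
  assumes x: "x \<in> prodX N d Xs" and min: "\<And>y. y \<in> prodX N d Xs \<Longrightarrow> potential x \<le> potential y"
  shows "nash_eq x"
  unfolding is_nash_eq_def
proof (intro conjI x allI impI ballI)
  fix \<nu> w assume "\<nu> < N" and "w \<in> Xs \<nu>"
  then have "potential x \<le> potential (x(\<nu> := w))"
    using x Xs_vecs by (intro min prodX_update) auto
  then show "cost \<nu> x \<le> cost \<nu> (x(\<nu> := w))"
    using potential_fun_upd[OF \<open>\<nu> < N\<close>, of x "x \<nu>"] potential_fun_upd[OF \<open>\<nu> < N\<close>, of x w]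
    by simp
qed

lemma continuous_on_phi [continuous_intros]:
  "continuous_on S f \<Longrightarrow> continuous_on S (\<lambda>x. phi (f x))"
  using continuous_on_compose2[OF C1_differentiable_imp_continuous_on[OF phi_C1]] by blast

lemma continuous_potential: "continuous_on UNIV potential"
  unfolding potential_def own_cost_def quad_form_def shared_cost_def lin_plus_def lin_minus_def
    matT_apply_def divide_inverse
  by (intro continuous_intros)

lemma potential_coercive:
  "\<exists>\<alpha>>0. \<exists>\<beta>. \<forall>y\<in>profiles N d. \<alpha> * profile_inner N d y y - \<beta> \<le> potential y"
proof -
  obtain lam where "lam > 0"
    and lam: "\<And>y. y \<in> profiles N d \<Longrightarrow> lam * profile_inner N d y y \<le> (\<Sum>\<nu><N. quad_form (d \<nu>) (Q \<nu>) (y \<nu>))"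
    using profile_quad_form_coercive[OF Q_pd] by blast
  define g where "g = potential_grad (\<lambda>_ _. 0)"
  \<comment> \<open>the quadratic lower bound at the origin, with the linear term absorbed by Young's inequality\<close>
  have "lam / 4 * profile_inner N d y y - (profile_inner N d g g / lam - potential (\<lambda>_ _. 0)) \<le> potential y"
    if "y \<in> profiles N d" for y
    using potential_above_tangent[of "\<lambda>_ _. 0" y] lam[OF that]
      profile_inner_ge_neg_squares[OF \<open>lam > 0\<close>, of N d y g]
    by (simp add: g_def)
  with \<open>lam > 0\<close> show ?thesis
    by (intro exI[of _ "lam / 4"]) auto
qed

lemma potential_sublevel_bounded:
  "\<exists>R. \<forall>y\<in>profiles N d. potential y \<le> t \<longrightarrow> (\<forall>\<nu> j. \<bar>y \<nu> j\<bar> \<le> R)"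
proof -
  obtain \<alpha> \<beta> where "\<alpha> > 0" and coercive: "\<And>y. y \<in> profiles N d \<Longrightarrow> \<alpha> * profile_inner N d y y - \<beta> \<le> potential y"
    using potential_coercive by blast
  define R where "R = sqrt (\<bar>t + \<beta>\<bar> / \<alpha>)"
  have "\<bar>y \<nu> j\<bar> \<le> R" if y: "y \<in> profiles N d" and "potential y \<le> t" for y \<nu> j
  proof (cases "\<nu> < N \<and> j < d \<nu>")
    case True
    then have "\<alpha> * (y \<nu> j)\<^sup>2 \<le> \<bar>t + \<beta>\<bar>"
      using coercive[OF y] \<open>potential y \<le> t\<close> profile_coordinate_sq_le[of \<nu> N j d y] \<open>\<alpha> > 0\<close>
      by (smt (verit) mult_left_mono)
    then have "(y \<nu> j)\<^sup>2 \<le> \<bar>t + \<beta>\<bar> / \<alpha>"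
      using \<open>\<alpha> > 0\<close> by (simp add: pos_le_divide_eq mult.commute)
    then show ?thesis
      unfolding R_def by (metis real_sqrt_abs real_sqrt_le_iff)
  next
    case False
    then have "y \<nu> j = 0"
      using y by (cases "\<nu> < N") (auto simp: profiles_def vecs_def)
    then show ?thesis
      using \<open>\<alpha> > 0\<close> by (simp add: R_def)
  qed
  then show ?thesis by blast
qed

lemma nash_eq_exists: "\<exists>x. nash_eq x"
proof -
  obtain x0 where x0: "x0 \<in> prodX N d Xs"
  proof
    have "(SOME w. w \<in> Xs \<nu>) \<in> Xs \<nu>" if "\<nu> < N" for \<nu>
      using Xs_nonempty that by (simp add: some_in_eq)
    then show "(\<lambda>\<nu>. if \<nu> < N then (SOME w. w \<in> Xs \<nu>) else (\<lambda>_. 0)) \<in> prodX N d Xs"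
      using Xs_vecs by (auto simp: prodX_def profiles_def)
  qed
  obtain R where R: "\<And>y. y \<in> profiles N d \<Longrightarrow> potential y \<le> potential x0 \<Longrightarrow> \<forall>\<nu> j. \<bar>y \<nu> j\<bar> \<le> R"
    using potential_sublevel_bounded by blast
  have "\<exists>x\<in>prodX N d Xs. \<forall>y\<in>prodX N d Xs. potential x \<le> potential y"
  proof (rule continuous_attains_inf_sublevel[OF X_closed compact_coordinatewise_bounded x0])
    show "continuous_on (prodX N d Xs) potential"
      using continuous_potential continuous_on_subset by blast
    show "y \<in> {x. \<forall>\<nu> j. \<bar>x \<nu> j\<bar> \<le> R}" if "y \<in> prodX N d Xs" "potential y \<le> potential x0" for y
      using R that by (simp add: prodX_def)
  qed
  then show ?thesis
    using potential_minimizer_is_nash_eq by blast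
qed

end

theorem mainTheorem6:
  fixes N m :: nat and d :: "nat \<Rightarrow> nat"
    and Q :: "nat \<Rightarrow> nat \<Rightarrow> nat \<Rightarrow> real" and c :: "nat \<Rightarrow> nat \<Rightarrow> real"
    and Xs :: "nat \<Rightarrow> (nat \<Rightarrow> real) set"
    and a qy :: "nat \<Rightarrow> real" and B L :: "nat \<Rightarrow> nat \<Rightarrow> nat \<Rightarrow> real"
    and eps :: real and phi :: "real \<Rightarrow> real"
  assumes "N \<ge> 1" and "m \<ge> 1"
    and "\<forall>\<nu><N. sym_pd (d \<nu>) (Q \<nu>)"
    and "\<forall>\<nu><N. c \<nu> \<in> vecs (d \<nu>)"
    and "\<forall>\<nu><N. Xs \<nu> \<noteq> {} \<and> Xs \<nu> \<subseteq> vecs (d \<nu>)"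
    and "convex_profile_set (prodX N d Xs)" and "closed (prodX N d Xs)"
    and "\<forall>i<m. a i \<ge> 0"
    and "\<forall>i<m. qy i > 0"
    and "eps > 0"
    and "convex_on UNIV phi" and "phi C1_differentiable_on UNIV"
  shows "\<exists>!x. is_nash_eq N d Xs (theta N d m Q c a qy B L phi) x"
proof -
  interpret smoothed_nep N m d Q c Xs a qy B L phi
    using assms by unfold_locales auto
  show ?thesis
    using nash_eq_exists nash_eq_unique by blast
qed

end
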